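(* Let $\mathbf{k}$ be a commutative ring, $n\ge0$, $\mathcal{A}=\mathbf{k}[S_n]$. For every $\beta\in\operatorname{Comp}_n$, the subspace $\mathcal{R}_\beta$ is a $(\Sigma_n,\mathcal{A})$-subbimodule of $\mathcal{A}$; that is, $\mathcal{R}_\beta\mathcal{A}\subseteq\mathcal{R}_\beta$ and $\Sigma_n\mathcal{R}_\beta\subseteq\mathcal{R}_\beta$.
   Context: $S_n$ is the symmetric group on $[n]=\{1,\dots,n\}$, with product $(uw)(i)=u(w(i))$. For $w\in S_n$, $\operatorname{Des}(w)=\{i\in[n-1]: w(i)>w(i+1)\}$. For $I\subseteq[n-1]$, $\mathbf{B}_I=\sum_{w\in S_n,\ \operatorname{Des}(w)\subseteq I} w\in\mathcal{A}$. The descent algebra $\Sigma_n\subseteq\mathcal{A}$ is the $\mathbf{k}$-span of all $\mathbf{B}_I$ for $I\subseteq[n-1]$. A composition $\alpha=(\alpha_1,\dots,\alpha_p)$ of $n$ is a finite sequence of positive integers with sum $n$; $\operatorname{Comp}_n$ is the set of these. $\operatorname{Set}(\alpha)=\{\alpha_1,\alpha_1+\alpha_2,\dots,\alpha_1+\cdots+\alpha_{p-1}\}$, $\mathbf{B}_\alpha:=\mathbf{B}_{\operatorname{Set}(\alpha)}$, and $\mathcal{R}_\beta:=\mathbf{B}_\beta\mathcal{A}$. *)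

theory Defs
  imports "HOL-Combinatorics.Permutations"
begin

definition Sn :: "nat \<Rightarrow> (nat \<Rightarrow> nat) set" where
  "Sn n = {p. p permutes {1..n}}"

text \<open>The group algebra k[S_n]: functions S_n -> k, represented as functions on all maps
  vanishing outside S_n.\<close>
definition grp_alg :: "nat \<Rightarrow> ((nat \<Rightarrow> nat) \<Rightarrow> 'k::comm_ring_1) set" where
  "grp_alg n = {a. \<forall>g. g \<notin> Sn n \<longrightarrow> a g = 0}"

definition gmult :: "nat \<Rightarrow> ((nat \<Rightarrow> nat) \<Rightarrow> 'k::comm_ring_1) \<Rightarrow> ((nat \<Rightarrow> nat) \<Rightarrow> 'k)
    \<Rightarrow> ((nat \<Rightarrow> nat) \<Rightarrow> 'k)" where
  "gmult n a b = (\<lambda>g. \<Sum>(u, w) \<in> {(u, w). u \<in> Sn n \<and> w \<in> Sn n \<and> u \<circ> w = g}. a u * b w)"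

definition Des :: "nat \<Rightarrow> (nat \<Rightarrow> nat) \<Rightarrow> nat set" where
  "Des n w = {i \<in> {1..n-1}. w i > w (Suc i)}"

definition BI :: "nat \<Rightarrow> nat set \<Rightarrow> ((nat \<Rightarrow> nat) \<Rightarrow> 'k::comm_ring_1)" where
  "BI n I = (\<lambda>w. if w \<in> Sn n \<and> Des n w \<subseteq> I then 1 else 0)"

text \<open>The descent algebra: the k-span of all B_I, I a subset of [n-1]
  (finitely many generators, so the span is the set of their linear combinations).\<close>
definition descent_alg :: "nat \<Rightarrow> ((nat \<Rightarrow> nat) \<Rightarrow> 'k::comm_ring_1) set" where
  "descent_alg n = {(\<lambda>w. \<Sum>I\<in>Pow {1..n-1}. c I * BI n I w) | c. True}"

definition Comp :: "nat \<Rightarrow> nat list set" where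
  "Comp n = {\<alpha>. (\<forall>x\<in>set \<alpha>. 0 < x) \<and> sum_list \<alpha> = n}"

definition SetC :: "nat list \<Rightarrow> nat set" where
  "SetC \<alpha> = {sum_list (take i \<alpha>) | i. 1 \<le> i \<and> i < length \<alpha>}"

definition B_comp :: "nat \<Rightarrow> nat list \<Rightarrow> ((nat \<Rightarrow> nat) \<Rightarrow> 'k::comm_ring_1)" where
  "B_comp n \<alpha> = BI n (SetC \<alpha>)"

definition R_comp :: "nat \<Rightarrow> nat list \<Rightarrow> ((nat \<Rightarrow> nat) \<Rightarrow> 'k::comm_ring_1) set" where
  "R_comp n \<beta> = {gmult n (B_comp n \<beta>) a | a. a \<in> grp_alg n}"

end

theory Submission
  imports Defs "HOL-Library.Product_Lexorder"
begin

text \<open>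
  Let J = Set(beta) and cut {1..n} after each element of J into blocks. Then Des(w) \<subseteq> J
  says that w increases on every block, and every g \<in> S_n factors uniquely as g = x y with x
  increasing on the blocks and y in the Young subgroup S_J of permutations preserving every
  block. The coefficient of g in B_I B_J counts the factorizations g = v u with Des(v) \<subseteq> I
  and Des(u) \<subseteq> J. Refactoring v with respect to I gives an injection between these sets for
  any two permutations with the same relative order inside each block, so the coefficient
  depends only on the S_J-part y of g. Hence B_I B_J = B_J T with T supported on S_J, which
  gives B_I R_beta \<subseteq> R_beta; closure under right multiplication is associativity.
\<close>

section \<open>The group algebra\<close>

lemma Sn_finite: "finite (Sn n)"
  unfolding Sn_def by (rule finite_permutations) simp

lemma Sn_comp: "u \<in> Sn n \<Longrightarrow> w \<in> Sn n \<Longrightarrow> u \<circ> w \<in> Sn n"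
  by (simp add: Sn_def permutes_compose)

lemma Sn_inv: "u \<in> Sn n \<Longrightarrow> inv u \<in> Sn n"
  by (simp add: Sn_def permutes_inv)

lemma Sn_permutes: "u \<in> Sn n \<Longrightarrow> u permutes {1..n}"
  by (simp add: Sn_def)

lemma Sn_inj: "w \<in> Sn n \<Longrightarrow> w p = w q \<Longrightarrow> p = q"
  by (drule Sn_permutes, drule permutes_inj) (simp add: inj_eq)

lemma Sn_image: "w \<in> Sn n \<Longrightarrow> p \<in> {1..n} \<Longrightarrow> w p \<in> {1..n}"
  by (drule Sn_permutes) (simp only: permutes_in_image)

lemma Sn_inverses:
  assumes "u \<in> Sn n"
  shows "u (inv u p) = p" and "inv u (u p) = p" and "u \<circ> inv u = id" and "inv u \<circ> u = id"
  using permutes_inverses[OF Sn_permutes[OF assms]] permutes_inv_o[OF Sn_permutes[OF assms]]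
  by simp_all

lemma Sn_comp_cancel:
  assumes "u \<in> Sn n"
  shows "u \<circ> (inv u \<circ> g) = g" and "inv u \<circ> (u \<circ> g) = g"
  using Sn_inverses(3,4)[OF assms] by (simp_all add: o_assoc)

lemma gmult_apply:
  "gmult n a b g = (if g \<in> Sn n then \<Sum>u\<in>Sn n. a u * b (inv u \<circ> g) else 0)"
proof -
  have "{(u, w). u \<in> Sn n \<and> w \<in> Sn n \<and> u \<circ> w = g}
      = (if g \<in> Sn n then (\<lambda>u. (u, inv u \<circ> g)) ` Sn n else {})"
  proof (cases "g \<in> Sn n")
    case True
    then show ?thesis
      by (force simp: Sn_comp_cancel Sn_comp Sn_inv)
  qed (auto simp: Sn_comp)
  moreover have "inj_on (\<lambda>u. (u, inv u \<circ> g)) (Sn n)"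
    by (rule inj_onI) simp
  ultimately show ?thesis
    unfolding gmult_def by (simp add: sum.reindex)
qed

lemma gmult_in_grp_alg: "gmult n a b \<in> grp_alg n"
  by (simp add: grp_alg_def gmult_apply)

lemma gmult_assoc: "gmult n (gmult n a b) c = gmult n a (gmult n b c)"
proof
  fix g
  show "gmult n (gmult n a b) c g = gmult n a (gmult n b c) g"
  proof (cases "g \<in> Sn n")
    case g: True
    have shift: "(\<Sum>u\<in>Sn n. b (inv v \<circ> u) * c (inv u \<circ> g))
        = (\<Sum>t\<in>Sn n. b t * c (inv t \<circ> (inv v \<circ> g)))" (is "_ = ?rhs")
      if v: "v \<in> Sn n" for v
    proof -
      have "(\<Sum>u\<in>Sn n. b (inv v \<circ> u) * c (inv u \<circ> g))
          = (\<Sum>t\<in>Sn n. b (inv v \<circ> (v \<circ> t)) * c (inv (v \<circ> t) \<circ> g))"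
        unfolding Sn_def by (rule setum_permutations_compose_left) (use v in \<open>simp add: Sn_def\<close>)
      also have "\<dots> = ?rhs"
      proof (rule sum.cong[OF refl])
        fix t assume t: "t \<in> Sn n"
        have "inv (v \<circ> t) = inv t \<circ> inv v"
          using v t by (intro o_inv_distrib) (auto simp: Sn_def permutes_bij)
        then show "b (inv v \<circ> (v \<circ> t)) * c (inv (v \<circ> t) \<circ> g) = b t * c (inv t \<circ> (inv v \<circ> g))"
          using v by (simp add: Sn_inverses o_assoc)
      qed
      finally show ?thesis .
    qed
    have "gmult n (gmult n a b) c g
        = (\<Sum>u\<in>Sn n. (\<Sum>v\<in>Sn n. a v * b (inv v \<circ> u)) * c (inv u \<circ> g))"
      using g by (simp add: gmult_apply)
    also have "\<dots> = (\<Sum>v\<in>Sn n. a v * (\<Sum>u\<in>Sn n. b (inv v \<circ> u) * c (inv u \<circ> g)))"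
      unfolding sum_distrib_left sum_distrib_right mult.assoc by (rule sum.swap)
    also have "\<dots> = (\<Sum>v\<in>Sn n. a v * gmult n b c (inv v \<circ> g))"
      using g by (intro sum.cong refl) (simp add: shift gmult_apply Sn_comp Sn_inv)
    also have "\<dots> = gmult n a (gmult n b c) g"
      using g by (simp add: gmult_apply)
    finally show ?thesis .
  qed (simp add: gmult_apply)
qed

lemma gmult_sum_left:
  "gmult n (\<lambda>w. \<Sum>i\<in>S. c i * f i w) b = (\<lambda>g. \<Sum>i\<in>S. c i * gmult n (f i) b g)"
proof
  fix g
  show "gmult n (\<lambda>w. \<Sum>i\<in>S. c i * f i w) b g = (\<Sum>i\<in>S. c i * gmult n (f i) b g)"
    by (cases "g \<in> Sn n")
      (simp_all add: gmult_apply sum_distrib_left sum_distrib_right mult.assoc, rule sum.swap)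
qed

lemma gmult_sum_right:
  "gmult n a (\<lambda>w. \<Sum>i\<in>S. c i * f i w) = (\<lambda>g. \<Sum>i\<in>S. c i * gmult n a (f i) g)"
proof
  fix g
  show "gmult n a (\<lambda>w. \<Sum>i\<in>S. c i * f i w) g = (\<Sum>i\<in>S. c i * gmult n a (f i) g)"
    by (cases "g \<in> Sn n")
      (simp_all add: gmult_apply sum_distrib_left mult.left_commute, rule sum.swap)
qed

section \<open>Blocks and the Young subgroup\<close>

definition block :: "nat \<Rightarrow> nat set \<Rightarrow> nat \<Rightarrow> nat" where
  "block n J p = card {i \<in> J. i < p \<and> i < n}"

lemma finite_block_set: "finite {i \<in> J. i < p \<and> i < (n::nat)}"
  by (rule finite_subset[of _ "{..<n}"]) auto

lemma block_mono: "p \<le> q \<Longrightarrow> block n J p \<le> block n J q"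
  unfolding block_def by (rule card_mono[OF finite_block_set]) auto

lemma block_strict_mono:
  assumes "i \<in> J" "p \<le> i" "i < q" "q \<le> n"
  shows "block n J p < block n J q"
  unfolding block_def
proof (rule psubset_card_mono[OF finite_block_set], rule psubsetI)
  show "{i \<in> J. i < p \<and> i < n} \<subseteq> {i \<in> J. i < q \<and> i < n}"
    using assms(2,3) by force
  show "{i \<in> J. i < p \<and> i < n} \<noteq> {i \<in> J. i < q \<and> i < n}"
    using assms by (metis (no_types, lifting) leD less_le_trans mem_Collect_eq)
qed

lemma block_Suc:
  assumes "i \<notin> J"
  shows "block n J (Suc i) = block n J i"
proof -
  have "{j \<in> J. j < Suc i \<and> j < n} = {j \<in> J. j < i \<and> j < n}"
    using assms less_Suc_eq by auto
  then show ?thesis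
    by (simp add: block_def)
qed

definition block_increasing :: "nat \<Rightarrow> nat set \<Rightarrow> (nat \<Rightarrow> nat) \<Rightarrow> bool" where
  "block_increasing n J w \<longleftrightarrow>
     (\<forall>p\<in>{1..n}. \<forall>q\<in>{1..n}. p < q \<longrightarrow> block n J p = block n J q \<longrightarrow> w p < w q)"

lemma Des_subset_iff_block_increasing:
  assumes w: "w \<in> Sn n"
  shows "Des n w \<subseteq> J \<longleftrightarrow> block_increasing n J w"
proof
  assume des: "Des n w \<subseteq> J"
  show "block_increasing n J w"
    unfolding block_increasing_def
  proof (intro ballI impI)
    fix p q assume p: "p \<in> {1..n}" and q: "q \<in> {1..n}" and "p < q"
      and same: "block n J p = block n J q"
    have ascent: "w i < w (Suc i)" if "p \<le> i" "i < q" for i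
    proof -
      have "i \<notin> J"
        using block_strict_mono[of i J p q n] that q same by auto
      then have "i \<notin> Des n w"
        using des by auto
      moreover have "i \<in> {1..n-1}"
        using that p q by auto
      ultimately have "\<not> w (Suc i) < w i"
        by (simp add: Des_def)
      moreover have "w i \<noteq> w (Suc i)"
        using Sn_inj[OF w, of i "Suc i"] by auto
      ultimately show ?thesis by simp
    qed
    have "w p < w m" if "Suc p \<le> m" "m \<le> q" for m
      using that
    proof (induction m rule: dec_induct)
      case base
      then show ?case using ascent \<open>p < q\<close> by simp
    next
      case (step m)
      then show ?case using ascent[of m] by simp
    qed
    then show "w p < w q"
      using \<open>p < q\<close> by simp
  qed
next
  assume inc: "block_increasing n J w"
  show "Des n w \<subseteq> J"
  proof
    fix i assume "i \<in> Des n w"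
    then have i: "i \<in> {1..n}" "Suc i \<in> {1..n}" and "w (Suc i) < w i"
      by (auto simp: Des_def)
    show "i \<in> J"
    proof (rule ccontr)
      assume "i \<notin> J"
      then have "w i < w (Suc i)"
        using inc i block_Suc[of i J n] unfolding block_increasing_def by simp
      with \<open>w (Suc i) < w i\<close> show False by simp
    qed
  qed
qed

text \<open>Pairs are ordered lexicographically (theory \<open>Product_Lexorder\<close>).\<close>

lemma block_increasing_less_iff:
  assumes w: "block_increasing n J w" and p: "p \<in> {1..n}" and q: "q \<in> {1..n}"
  shows "p < q \<longleftrightarrow> (block n J p, w p) < (block n J q, w q)"
proof -
  have less: "(block n J a, w a) < (block n J b, w b)"
    if "a \<in> {1..n}" "b \<in> {1..n}" "a < b" for a b
  proof (cases "block n J a = block n J b")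
    case True
    then show ?thesis
      using w that unfolding block_increasing_def by simp
  next
    case False
    then show ?thesis
      using block_mono[of a b n J] \<open>a < b\<close> by simp
  qed
  show ?thesis
  proof
    show "p < q \<Longrightarrow> (block n J p, w p) < (block n J q, w q)"
      using less p q by blast
    show "(block n J p, w p) < (block n J q, w q) \<Longrightarrow> p < q"
      using less[OF q p] by (metis less_asym less_irrefl linorder_neqE_nat)
  qed
qed

definition young_subgroup :: "nat \<Rightarrow> nat set \<Rightarrow> (nat \<Rightarrow> nat) set" where
  "young_subgroup n J = {y \<in> Sn n. \<forall>p\<in>{1..n}. block n J (y p) = block n J p}"

lemma young_subgroup_inv:
  assumes y: "y \<in> young_subgroup n J"
  shows "inv y \<in> young_subgroup n J"
proof -
  have yS: "y \<in> Sn n"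
    using y by (simp add: young_subgroup_def)
  have "block n J (inv y p) = block n J p" if "p \<in> {1..n}" for p
  proof -
    have "inv y p \<in> {1..n}"
      using that Sn_image[OF Sn_inv[OF yS]] by blast
    then have "block n J (y (inv y p)) = block n J (inv y p)"
      using y by (simp add: young_subgroup_def)
    then show ?thesis
      by (simp add: Sn_inverses[OF yS])
  qed
  then show ?thesis
    by (simp add: young_subgroup_def Sn_inv[OF yS])
qed

lemma young_subgroup_comp:
  assumes "y \<in> young_subgroup n J" "z \<in> young_subgroup n J"
  shows "y \<circ> z \<in> young_subgroup n J"
  using assms Sn_image[of z n] by (simp add: young_subgroup_def Sn_comp)

section \<open>Parabolic factorization\<close>

lemma down_closed_eq_atLeastAtMost_card:
  fixes A :: "nat set"
  assumes fin: "finite A" and "0 \<notin> A"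
    and down: "\<And>c c'. c \<in> A \<Longrightarrow> 0 < c' \<Longrightarrow> c' \<le> c \<Longrightarrow> c' \<in> A"
  shows "A = {1..card A}"
proof (cases "A = {}")
  case False
  have eq: "A = {1..Max A}"
  proof
    show "A \<subseteq> {1..Max A}"
    proof
      fix x assume x: "x \<in> A"
      then have "x \<noteq> 0"
        using \<open>0 \<notin> A\<close> by metis
      moreover have "x \<le> Max A"
        using Max_ge[OF fin x] .
      ultimately show "x \<in> {1..Max A}"
        by simp
    qed
    show "{1..Max A} \<subseteq> A"
    proof
      fix x assume "x \<in> {1..Max A}"
      then show "x \<in> A"
        using down[OF Max_in[OF fin False], of x] by simp
    qed
  qed
  have "card {1..Max A} = Max A"
    by simp
  with eq show ?thesis
    by simp
qed simp

definition rank_perm :: "nat \<Rightarrow> (nat \<Rightarrow> 'a::linorder) \<Rightarrow> nat \<Rightarrow> nat" where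
  "rank_perm n K b = (if b \<in> {1..n} then Suc (card {c \<in> {1..n}. K c < K b}) else b)"

lemma rank_perm_less_iff:
  assumes "b \<in> {1..n}" "c \<in> {1..n}"
  shows "rank_perm n K b < rank_perm n K c \<longleftrightarrow> K b < K c"
proof -
  have "card {x \<in> {1..n}. K x < K c} \<le> card {x \<in> {1..n}. K x < K b}" if "K c \<le> K b"
    using that by (intro card_mono) force+
  moreover have "card {x \<in> {1..n}. K x < K b} < card {x \<in> {1..n}. K x < K c}" if "K b < K c"
  proof (rule psubset_card_mono)
    show "{x \<in> {1..n}. K x < K b} \<subset> {x \<in> {1..n}. K x < K c}"
      using that assms(1) by force
  qed simp
  ultimately show ?thesis
    using assms by (simp add: rank_perm_def) (meson leD not_le)
qed

lemma rank_perm_in_Sn: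
  assumes inj: "inj_on K {1..n}"
  shows "rank_perm n K \<in> Sn n"
  unfolding Sn_def
proof (rule CollectI, rule inj_imp_permutes)
  show "inj_on (rank_perm n K) {1..n}"
  proof (rule inj_onI)
    fix b c assume "b \<in> {1..n}" "c \<in> {1..n}" "rank_perm n K b = rank_perm n K c"
    then show "b = c"
      using rank_perm_less_iff[of b n c K] rank_perm_less_iff[of c n b K] inj
      by (metis inj_onD less_irrefl neqE)
  qed
  show "rank_perm n K b \<in> {1..n}" if b: "b \<in> {1..n}" for b
  proof -
    have "card {c \<in> {1..n}. K c < K b} \<le> card ({1..n} - {b})"
      by (rule card_mono) auto
    then show ?thesis
      using b by (simp add: rank_perm_def) linarith
  qed
  show "rank_perm n K b = b" if "b \<notin> {1..n}" for b
    unfolding rank_perm_def by (rule if_not_P[OF that])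
qed simp

lemma block_rank_perm:
  assumes K: "\<And>b c. b \<in> {1..n} \<Longrightarrow> c \<in> {1..n} \<Longrightarrow> block n J b < block n J c \<Longrightarrow> K b < K c"
    and b: "b \<in> {1..n}"
  shows "block n J (rank_perm n K b) = block n J b"
proof -
  define below where "below = {c \<in> {1..n}. block n J c < block n J b}"
  define upto where "upto = {c \<in> {1..n}. block n J c \<le> block n J b}"
  have below_eq: "below = {1..card below}" and upto_eq: "upto = {1..card upto}"
    unfolding below_def upto_def
    by (rule down_closed_eq_atLeastAtMost_card;
        force dest: block_mono[of _ _ n J] simp: Suc_le_eq)+
  define smaller where "smaller = {c \<in> {1..n}. K c < K b}"
  have "below \<subseteq> smaller"
    using K b unfolding below_def smaller_def by blast
  then have lower: "card below < rank_perm n K b"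
    using b card_mono[of smaller below] by (simp add: rank_perm_def smaller_def)
  have "smaller \<subseteq> upto - {b}"
  proof
    fix c assume "c \<in> smaller"
    then have c: "c \<in> {1..n}" "K c < K b"
      by (simp_all add: smaller_def)
    then have "\<not> block n J b < block n J c"
      using K[OF b c(1)] by (meson less_asym)
    moreover have "c \<noteq> b"
      using c(2) by auto
    ultimately show "c \<in> upto - {b}"
      using c(1) by (simp add: upto_def)
  qed
  moreover have "finite upto" "b \<in> upto"
    using b by (simp_all add: upto_def)
  ultimately have "card smaller < card upto"
    by (meson card_Diff1_less card_mono finite_Diff le_less_trans)
  then have upper: "rank_perm n K b \<le> card upto"
    using b by (simp add: rank_perm_def smaller_def)
  have "rank_perm n K b \<in> upto - below"
    using lower upper by (subst upto_eq, subst below_eq) (simp add: rank_perm_def)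
  then show ?thesis
    by (auto simp: upto_def below_def)
qed

lemma young_factorization:
  assumes g: "g \<in> Sn n"
  obtains x y where "x \<in> Sn n" "block_increasing n J x" "y \<in> young_subgroup n J" "g = x \<circ> y"
proof -
  \<comment> \<open>\<open>y\<close> sorts \<open>{1..n}\<close> by block, and within a block by the value of \<open>g\<close>.\<close>
  define K where "K b = (block n J b, g b)" for b
  have "inj_on K {1..n}"
    by (rule inj_onI) (simp add: K_def Sn_inj[OF g])
  define y where "y = rank_perm n K"
  have yS: "y \<in> Sn n"
    unfolding y_def by (rule rank_perm_in_Sn) fact
  have y_young: "y \<in> young_subgroup n J"
    using yS block_rank_perm[of n J K] by (simp add: young_subgroup_def y_def K_def)
  define x where "x = g \<circ> inv y"
  have "g = x \<circ> y"
    by (simp add: x_def comp_assoc Sn_inverses[OF yS])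
  moreover have "x \<in> Sn n"
    unfolding x_def using g yS by (simp add: Sn_comp Sn_inv)
  moreover have "block_increasing n J x"
    unfolding block_increasing_def
  proof (intro ballI impI)
    fix p q assume p: "p \<in> {1..n}" and q: "q \<in> {1..n}" and "p < q"
      and same: "block n J p = block n J q"
    define b c where "b = inv y p" and "c = inv y q"
    have bc: "b \<in> {1..n}" "c \<in> {1..n}" "y b = p" "y c = q"
      using p q Sn_image[OF Sn_inv[OF yS]] by (simp_all add: b_def c_def Sn_inverses[OF yS])
    moreover have "block n J (y b) = block n J b" "block n J (y c) = block n J c"
      using y_young bc(1,2) by (simp_all add: young_subgroup_def)
    ultimately have "block n J b = block n J c"
      using same by simp
    moreover have "K b < K c"
      using rank_perm_less_iff[OF bc(1,2), of K] bc(3,4) \<open>p < q\<close> by (simp add: y_def)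
    ultimately have "g b < g c"
      by (simp add: K_def)
    then show "x p < x q"
      by (simp add: x_def b_def c_def)
  qed
  ultimately show ?thesis
    using y_young that by blast
qed

lemma permutes_strict_mono_on_eq_id:
  fixes S :: "'a::wellorder set"
  assumes s: "s permutes S" and mono: "strict_mono_on S s"
  shows "s = id"
proof (rule permutes_natset_le[OF s], rule ballI)
  fix i assume "i \<in> S"
  then show "s i \<le> i"
  proof (induction i rule: less_induct)
    case (less i)
    note IH = less.IH and i = less.prems
    define r where "r = inv s i"
    have r: "s r = i" "r \<in> S"
      unfolding r_def using permutes_inverses(1)[OF s] i
      by (blast, simp only: permutes_in_image[OF permutes_inv[OF s]])
    show ?case
    proof (cases r i rule: linorder_cases)
      case less
      with IH r show ?thesis
        by fastforce
    next
      case equal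
      with r show ?thesis
        by simp
    next
      case greater
      with r i mono show ?thesis
        unfolding strict_mono_on_def by fastforce
    qed
  qed
qed

lemma young_subgroup_eq_id:
  assumes x: "block_increasing n J x" and xs: "block_increasing n J (x \<circ> s)"
    and s: "s \<in> young_subgroup n J"
  shows "s = id"
proof (rule permutes_strict_mono_on_eq_id)
  have sS: "s \<in> Sn n"
    using s by (simp add: young_subgroup_def)
  then show "s permutes {1..n}"
    by (rule Sn_permutes)
  show "strict_mono_on {1..n} s"
  proof (rule strict_mono_onI)
    fix p q assume p: "p \<in> {1..n}" and q: "q \<in> {1..n}" and "p < q"
    have "s p \<in> {1..n}" "s q \<in> {1..n}"
      using Sn_image[OF sS p] Sn_image[OF sS q] .
    moreover have "block n J (s p) = block n J p" "block n J (s q) = block n J q"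
      using s p q by (simp_all add: young_subgroup_def)
    ultimately show "s p < s q"
      using block_increasing_less_iff[OF xs p q] block_increasing_less_iff[OF x] \<open>p < q\<close>
      by simp
  qed
qed

lemma young_factorization_unique:
  assumes "block_increasing n J x1" "block_increasing n J x2"
    and y1: "y1 \<in> young_subgroup n J" and y2: "y2 \<in> young_subgroup n J"
    and eq: "x1 \<circ> y1 = x2 \<circ> y2"
  shows "x1 = x2"
proof -
  have y2S: "y2 \<in> Sn n"
    using y2 by (simp add: young_subgroup_def)
  have "x1 \<circ> (y1 \<circ> inv y2) = x2 \<circ> (y2 \<circ> inv y2)"
    by (simp add: o_assoc eq)
  then have "x1 \<circ> (y1 \<circ> inv y2) = x2"
    by (simp add: Sn_inverses[OF y2S])
  moreover have "y1 \<circ> inv y2 = id"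
    using young_subgroup_eq_id assms calculation young_subgroup_comp young_subgroup_inv
    by metis
  ultimately show ?thesis
    by simp
qed

section \<open>Products of the elements B_I\<close>

definition factorization_count :: "nat \<Rightarrow> nat set \<Rightarrow> nat set \<Rightarrow> (nat \<Rightarrow> nat) \<Rightarrow> nat" where
  "factorization_count n I J g =
     card {v \<in> Sn n. block_increasing n I v \<and> block_increasing n J (inv v \<circ> g)}"

lemma BI_apply: "u \<in> Sn n \<Longrightarrow> BI n I u = (if block_increasing n I u then 1 else 0)"
  by (simp add: BI_def Des_subset_iff_block_increasing)

lemma gmult_BI_BI_apply:
  assumes g: "g \<in> Sn n"
  shows "gmult n (BI n I) (BI n J) g = of_nat (factorization_count n I J g)"
proof -
  have "gmult n (BI n I) (BI n J) g
      = (\<Sum>v\<in>Sn n. if block_increasing n I v \<and> block_increasing n J (inv v \<circ> g) then 1 else 0)"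
    using g by (simp add: gmult_apply, intro sum.cong refl) (simp add: BI_apply Sn_comp Sn_inv)
  also have "\<dots> = of_nat (factorization_count n I J g)"
    by (simp add: factorization_count_def sum.inter_filter[symmetric] Sn_finite)
  finally show ?thesis .
qed

lemma block_increasing_young_comp:
  assumes u: "block_increasing n J u" "u \<in> Sn n"
    and v: "block_increasing n I v" and v': "block_increasing n I v'"
    and t: "t \<in> young_subgroup n I"
    and order: "\<And>b c. b \<in> {1..n} \<Longrightarrow> c \<in> {1..n} \<Longrightarrow> block n J b = block n J c \<Longrightarrow>
      v (u b) < v (u c) \<Longrightarrow> v' (t (u b)) < v' (t (u c))"
  shows "block_increasing n J (t \<circ> u)"
  unfolding block_increasing_def
proof (intro ballI impI)
  fix b c assume b: "b \<in> {1..n}" and c: "c \<in> {1..n}" and "b < c"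
    and same: "block n J b = block n J c"
  have p: "u b \<in> {1..n}" "u c \<in> {1..n}"
    using Sn_image[OF u(2) b] Sn_image[OF u(2) c] .
  have t_block: "block n I (t (u b)) = block n I (u b)" "block n I (t (u c)) = block n I (u c)"
    using t p by (simp_all add: young_subgroup_def)
  have tp: "t (u b) \<in> {1..n}" "t (u c) \<in> {1..n}"
    using t p Sn_image[of t n] by (simp_all add: young_subgroup_def)
  have "u b < u c"
    using u(1) b c \<open>b < c\<close> same unfolding block_increasing_def by blast
  then have "(block n I (u b), v (u b)) < (block n I (u c), v (u c))"
    using block_increasing_less_iff[OF v p] by simp
  then have "(block n I (t (u b)), v' (t (u b))) < (block n I (t (u c)), v' (t (u c)))"
    using order[OF b c same] t_block by auto
  then show "(t \<circ> u) b < (t \<circ> u) c"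
    using block_increasing_less_iff[OF v' tp] by simp
qed

lemma factorization_count_le:
  assumes g: "g \<in> Sn n" and g': "g' \<in> Sn n"
    and order: "\<And>b c. b \<in> {1..n} \<Longrightarrow> c \<in> {1..n} \<Longrightarrow> block n J b = block n J c \<Longrightarrow>
      g b < g c \<Longrightarrow> g' b < g' c"
  shows "factorization_count n I J g \<le> factorization_count n I J g'"
proof -
  \<comment> \<open>Factor \<open>\<rho> v = \<Phi> v \<tau> v\<close> with \<open>\<Phi> v\<close> increasing on the \<open>I\<close>-blocks and \<open>\<tau> v\<close> in the Young
    subgroup of \<open>I\<close>. A factorization \<open>g = v u\<close> yields \<open>g' = \<Phi> v (\<tau> v u)\<close>, and \<open>v \<mapsto> \<Phi> v\<close>
    is injective.\<close>
  define \<rho> where "\<rho> = g' \<circ> inv g"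
  have \<rho>S: "\<rho> \<in> Sn n"
    unfolding \<rho>_def using g g' by (simp add: Sn_comp Sn_inv)
  have "\<exists>v' t. v' \<in> Sn n \<and> block_increasing n I v' \<and> t \<in> young_subgroup n I \<and> \<rho> \<circ> v = v' \<circ> t"
    if "v \<in> Sn n" for v
    using young_factorization[OF Sn_comp[OF \<rho>S that]] by metis
  then obtain \<Phi> \<tau> where \<Phi>: "\<And>v. v \<in> Sn n \<Longrightarrow>
      \<Phi> v \<in> Sn n \<and> block_increasing n I (\<Phi> v) \<and> \<tau> v \<in> young_subgroup n I \<and> \<rho> \<circ> v = \<Phi> v \<circ> \<tau> v"
    by metis
  define A where "A = {v \<in> Sn n. block_increasing n I v \<and> block_increasing n J (inv v \<circ> g)}"
  define A' where "A' = {v \<in> Sn n. block_increasing n I v \<and> block_increasing n J (inv v \<circ> g')}"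
  have "\<Phi> v \<in> A'" if "v \<in> A" for v
  proof -
    have v: "v \<in> Sn n" "block_increasing n I v" "block_increasing n J (inv v \<circ> g)"
      using that by (simp_all add: A_def)
    have \<Phi>v: "\<Phi> v \<in> Sn n" "block_increasing n I (\<Phi> v)" "\<tau> v \<in> young_subgroup n I"
      and eq: "\<rho> \<circ> v = \<Phi> v \<circ> \<tau> v"
      using \<Phi>[OF v(1)] by simp_all
    have "g' = \<rho> \<circ> v \<circ> (inv v \<circ> g)"
      by (simp add: \<rho>_def comp_assoc Sn_comp_cancel[OF v(1)] Sn_inverses(4)[OF g])
    then have g'_eq: "g' = \<Phi> v \<circ> (\<tau> v \<circ> (inv v \<circ> g))"
      by (simp add: eq comp_assoc)
    have g_eq: "g = v \<circ> (inv v \<circ> g)"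
      by (simp add: Sn_comp_cancel[OF v(1)])
    have "block_increasing n J (\<tau> v \<circ> (inv v \<circ> g))"
    proof (rule block_increasing_young_comp[OF v(3) _ v(2) \<Phi>v(2,3)])
      show "inv v \<circ> g \<in> Sn n"
        using v(1) g by (simp add: Sn_comp Sn_inv)
      show "\<Phi> v (\<tau> v ((inv v \<circ> g) b)) < \<Phi> v (\<tau> v ((inv v \<circ> g) c))"
        if "b \<in> {1..n}" "c \<in> {1..n}" "block n J b = block n J c"
          "v ((inv v \<circ> g) b) < v ((inv v \<circ> g) c)" for b c
        using order[OF that(1-3)] that(4) g_eq g'_eq by (metis comp_apply)
    qed
    moreover have "inv (\<Phi> v) \<circ> g' = \<tau> v \<circ> (inv v \<circ> g)"
      by (simp add: g'_eq Sn_comp_cancel[OF \<Phi>v(1)])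
    ultimately show ?thesis
      using \<Phi>v by (simp add: A'_def)
  qed
  moreover have "inj_on \<Phi> A"
  proof (rule inj_onI)
    fix v1 v2 assume "v1 \<in> A" "v2 \<in> A" and same: "\<Phi> v1 = \<Phi> v2"
    then have v: "v1 \<in> Sn n" "block_increasing n I v1" "v2 \<in> Sn n" "block_increasing n I v2"
      by (simp_all add: A_def)
    have recover: "v \<circ> inv (\<tau> v) = inv \<rho> \<circ> \<Phi> v" if "v \<in> Sn n" for v
    proof -
      have \<tau>S: "\<tau> v \<in> Sn n" and eq: "\<rho> \<circ> v = \<Phi> v \<circ> \<tau> v"
        using \<Phi>[OF that] by (simp_all add: young_subgroup_def)
      have "v \<circ> inv (\<tau> v) = inv \<rho> \<circ> (\<rho> \<circ> v) \<circ> inv (\<tau> v)"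
        by (simp add: Sn_comp_cancel[OF \<rho>S])
      also have "\<dots> = inv \<rho> \<circ> \<Phi> v \<circ> (\<tau> v \<circ> inv (\<tau> v))"
        by (simp add: eq o_assoc)
      finally show ?thesis
        by (simp add: Sn_inverses(3)[OF \<tau>S])
    qed
    have "v1 \<circ> inv (\<tau> v1) = v2 \<circ> inv (\<tau> v2)"
      using recover[OF v(1)] recover[OF v(3)] same by simp
    then show "v1 = v2"
      using young_factorization_unique[OF v(2,4)] \<Phi>[OF v(1)] \<Phi>[OF v(3)] young_subgroup_inv
      by blast
  qed
  ultimately show ?thesis
    unfolding factorization_count_def A_def[symmetric] A'_def[symmetric]
    by (intro card_inj_on_le) (auto simp: A'_def Sn_finite)
qed

lemma factorization_count_young:
  assumes x: "x \<in> Sn n" "block_increasing n J x" and y: "y \<in> young_subgroup n J"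
  shows "factorization_count n I J (x \<circ> y) = factorization_count n I J y"
proof -
  have yS: "y \<in> Sn n"
    using y by (simp add: young_subgroup_def)
  have same_order: "(x \<circ> y) b < (x \<circ> y) c \<longleftrightarrow> y b < y c"
    if "b \<in> {1..n}" "c \<in> {1..n}" "block n J b = block n J c" for b c
  proof -
    have "y b \<in> {1..n}" "y c \<in> {1..n}" "block n J (y b) = block n J (y c)"
      using that y Sn_image[OF yS] by (simp_all add: young_subgroup_def)
    then show ?thesis
      using block_increasing_less_iff[OF x(2)] by simp
  qed
  show ?thesis
    using factorization_count_le[OF Sn_comp[OF x(1) yS] yS]
      factorization_count_le[OF yS Sn_comp[OF x(1) yS]] same_order
    by (meson le_antisym)
qed

lemma gmult_BI_BI:
  "gmult n (BI n I) (BI n J) = gmult n (BI n J)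
     (\<lambda>h. if h \<in> young_subgroup n J then of_nat (factorization_count n I J h) else 0)"
  (is "_ = gmult n _ ?T")
proof
  fix g
  show "gmult n (BI n I) (BI n J) g = gmult n (BI n J) ?T g"
  proof (cases "g \<in> Sn n")
    case g: True
    obtain x y where x: "x \<in> Sn n" "block_increasing n J x" and y: "y \<in> young_subgroup n J"
      and g_eq: "g = x \<circ> y"
      using young_factorization[OF g] by blast
    have "BI n J u * ?T (inv u \<circ> g) = (if u = x then of_nat (factorization_count n I J y) else 0)"
      if u: "u \<in> Sn n" for u
    proof (cases "u = x")
      case True
      then have "inv u \<circ> g = y"
        by (simp add: g_eq Sn_comp_cancel[OF x(1)])
      then show ?thesis
        using True x y by (simp add: BI_apply)
    next
      case False
      have "\<not> (block_increasing n J u \<and> inv u \<circ> g \<in> young_subgroup n J)"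
      proof
        assume "block_increasing n J u \<and> inv u \<circ> g \<in> young_subgroup n J"
        moreover have "x \<circ> y = u \<circ> (inv u \<circ> g)"
          by (simp add: g_eq Sn_comp_cancel[OF u])
        ultimately have "x = u"
          using young_factorization_unique[OF x(2) _ y] by blast
        with False show False
          by simp
      qed
      then show ?thesis
        using u False by (simp add: BI_apply)
    qed
    then have "gmult n (BI n J) ?T g = of_nat (factorization_count n I J y)"
      using g x(1) by (simp add: gmult_apply Sn_finite cong: sum.cong)
    also have "\<dots> = gmult n (BI n I) (BI n J) g"
      using g by (simp add: gmult_BI_BI_apply g_eq factorization_count_young[OF x y])
    finally show ?thesis ..
  qed (simp add: gmult_apply)
qed

theorem proposition2p7:
  fixes n :: nat and \<beta> :: "nat list"
  assumes "\<beta> \<in> Comp n"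
  shows "(\<forall>r \<in> (R_comp n \<beta> :: ((nat \<Rightarrow> nat) \<Rightarrow> 'k::comm_ring_1) set). \<forall>a \<in> grp_alg n.
            gmult n r a \<in> R_comp n \<beta>)
       \<and> (\<forall>s \<in> (descent_alg n :: ((nat \<Rightarrow> nat) \<Rightarrow> 'k::comm_ring_1) set). \<forall>r \<in> R_comp n \<beta>.
            gmult n s r \<in> R_comp n \<beta>)"
proof (intro conjI ballI)
  fix r a :: "(nat \<Rightarrow> nat) \<Rightarrow> 'k"
  assume "r \<in> R_comp n \<beta>"
  then obtain b where "r = gmult n (B_comp n \<beta>) b"
    by (auto simp: R_comp_def)
  then have "gmult n r a = gmult n (B_comp n \<beta>) (gmult n b a)"
    by (simp add: gmult_assoc)
  then show "gmult n r a \<in> R_comp n \<beta>"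
    unfolding R_comp_def using gmult_in_grp_alg by blast
next
  fix s r :: "(nat \<Rightarrow> nat) \<Rightarrow> 'k"
  assume "s \<in> descent_alg n" and "r \<in> R_comp n \<beta>"
  then obtain c b where s: "s = (\<lambda>w. \<Sum>I\<in>Pow {1..n-1}. c I * BI n I w)"
    and r: "r = gmult n (BI n (SetC \<beta>)) b"
    by (auto simp: descent_alg_def R_comp_def B_comp_def)
  define T :: "nat set \<Rightarrow> (nat \<Rightarrow> nat) \<Rightarrow> 'k" where
    "T I = (\<lambda>h. if h \<in> young_subgroup n (SetC \<beta>)
      then of_nat (factorization_count n I (SetC \<beta>) h) else 0)" for I
  have "gmult n s r
      = (\<lambda>g. \<Sum>I\<in>Pow {1..n-1}. c I * gmult n (gmult n (BI n I) (BI n (SetC \<beta>))) b g)"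
    by (simp add: s r gmult_sum_left gmult_assoc)
  also have "\<dots> = gmult n (B_comp n \<beta>) (\<lambda>h. \<Sum>I\<in>Pow {1..n-1}. c I * gmult n (T I) b h)"
    by (simp add: gmult_BI_BI T_def gmult_assoc gmult_sum_right B_comp_def)
  finally show "gmult n s r \<in> R_comp n \<beta>"
    by (auto simp: R_comp_def grp_alg_def gmult_apply)
qed

end
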